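(* Let $f=\frac1n\sum_{i=1}^n f_i$ where each $f_i:\mathbb{R}^d\to\mathbb{R}$ is $L$-smooth, and assume moreover that either each $f_i$ is $\mu$-strongly convex for some $\mu>0$, or $\inf_x f(x)>-\infty$. Let the stepsize satisfy $\gamma\le\frac1{Ln}$. Then the iterates of No Full Grad SVRG (described in the context) satisfy, for every epoch $s$, $$f(\omega_{s+1})\le f(\omega_s)-\frac{\gamma n}{2}\|\nabla f(\omega_s)\|^2+\frac{\gamma n}{2}\Big\|\nabla f(\omega_s)-\frac1n\sum_{t=0}^{n-1}v_s^t\Big\|^2.$$
   Context: No Full Grad SVRG: input $x_0^0\in\mathbb{R}^d$, $\omega_0=x_0^0$, $\tilde v_0^0=0$, $v_0=0$, stepsize $\gamma>0$. For epochs $s=0,1,\dots$: choose a permutation $\pi_s^0,\dots,\pi_s^{n-1}$ of the $n$ component indices (by any shuffling rule); for $t=0,\dots,n-1$ set $\tilde v_s^{t+1}=\frac{t}{t+1}\tilde v_s^t+\frac1{t+1}\nabla f_{\pi_s^t}(x_s^t)$, $v_s^t=\nabla f_{\pi_s^t}(x_s^t)-\nabla f_{\pi_s^t}(\omega_s)+v_s$, $x_s^{t+1}=x_s^t-\gamma v_s^t$; then $x_{s+1}^0=x_s^n$, $\omega_{s+1}=x_s^n$, $\tilde v_{s+1}^0=0$, $v_{s+1}=\tilde v_s^n$. *)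

theory Defs
  imports "HOL-Analysis.Analysis" "HOL-Combinatorics.Permutations"
begin

definition grad :: "('a::euclidean_space \<Rightarrow> real) \<Rightarrow> 'a \<Rightarrow> 'a" where
  "grad f x = (THE g. (f has_derivative (\<lambda>h. g \<bullet> h)) (at x))"

definition L_smooth :: "real \<Rightarrow> ('a::euclidean_space \<Rightarrow> real) \<Rightarrow> bool" where
  "L_smooth L f \<longleftrightarrow> (\<forall>x. f differentiable (at x)) \<and>
     (\<forall>x y. norm (grad f x - grad f y) \<le> L * norm (x - y))"

definition strongly_convex :: "real \<Rightarrow> ('a::euclidean_space \<Rightarrow> real) \<Rightarrow> bool" where
  "strongly_convex \<mu> f \<longleftrightarrow> convex_on UNIV (\<lambda>x. f x - \<mu> / 2 * (norm x)\<^sup>2)"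

text \<open>Inner loop of epoch s of No Full Grad SVRG (components indexed 0..n-1).
  Given the reference point omega = omega_s (= x_s^0), the estimate v = v_s and
  the permutation p = pi_s, nfg_inner ... t = (x_s^t, tilde v_s^t).\<close>
fun nfg_inner :: "(nat \<Rightarrow> 'a::euclidean_space \<Rightarrow> real) \<Rightarrow> real \<Rightarrow> (nat \<Rightarrow> nat)
                  \<Rightarrow> 'a \<Rightarrow> 'a \<Rightarrow> nat \<Rightarrow> 'a \<times> 'a" where
  "nfg_inner f \<gamma> p \<omega> v 0 = (\<omega>, 0)"
| "nfg_inner f \<gamma> p \<omega> v (Suc t) =
     (let (x, vt) = nfg_inner f \<gamma> p \<omega> v t;
          g = grad (f (p t)) x
      in (x - \<gamma> *\<^sub>R (g - grad (f (p t)) \<omega> + v),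
          (real t / real (t + 1)) *\<^sub>R vt + (1 / real (t + 1)) *\<^sub>R g))"

text \<open>Epoch-level state (omega_s, v_s); note x_s^0 = omega_s for all s.\<close>
fun nfg_epoch :: "(nat \<Rightarrow> 'a::euclidean_space \<Rightarrow> real) \<Rightarrow> nat \<Rightarrow> real
                  \<Rightarrow> (nat \<Rightarrow> nat \<Rightarrow> nat) \<Rightarrow> 'a \<Rightarrow> nat \<Rightarrow> 'a \<times> 'a" where
  "nfg_epoch f n \<gamma> \<pi> x0 0 = (x0, 0)"
| "nfg_epoch f n \<gamma> \<pi> x0 (Suc s) =
     (let (\<omega>, v) = nfg_epoch f n \<gamma> \<pi> x0 s in nfg_inner f \<gamma> (\<pi> s) \<omega> v n)"

definition nfg_omega where "nfg_omega f n \<gamma> \<pi> x0 s = fst (nfg_epoch f n \<gamma> \<pi> x0 s)"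
definition nfg_v where "nfg_v f n \<gamma> \<pi> x0 s = snd (nfg_epoch f n \<gamma> \<pi> x0 s)"

definition nfg_x where
  "nfg_x f n \<gamma> \<pi> x0 s t =
     fst (nfg_inner f \<gamma> (\<pi> s) (nfg_omega f n \<gamma> \<pi> x0 s) (nfg_v f n \<gamma> \<pi> x0 s) t)"

definition nfg_dir where
  "nfg_dir f n \<gamma> \<pi> x0 s t =
     grad (f (\<pi> s t)) (nfg_x f n \<gamma> \<pi> x0 s t) - grad (f (\<pi> s t)) (nfg_omega f n \<gamma> \<pi> x0 s)
     + nfg_v f n \<gamma> \<pi> x0 s"

end

theory Submission
  imports Defs
begin

text \<open>Summing the inner updates shows that one epoch is a single step
  \<open>\<omega>\<^sub>s\<^sub>+\<^sub>1 = \<omega>\<^sub>s - \<eta> g\<close> of length \<open>\<eta> = \<gamma> n\<close> along the averaged direction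
  \<open>g = (1/n) \<Sum>\<^sub>t v\<^sub>s\<^sup>t\<close>. The average \<open>f\<close> inherits \<open>L\<close>-smoothness from the \<open>f\<^sub>i\<close>, so the
  descent lemma gives \<open>f(\<omega> - \<eta> g) \<le> f(\<omega>) - \<eta> \<langle>\<nabla>f(\<omega>), g\<rangle> + L \<eta>\<^sup>2/2 \<parallel>g\<parallel>\<^sup>2\<close>. Since \<open>L \<eta> \<le> 1\<close>
  the last term is at most \<open>\<eta>/2 \<parallel>g\<parallel>\<^sup>2\<close>, and \<open>-\<langle>a, g\<rangle> + \<parallel>g\<parallel>\<^sup>2/2 = -\<parallel>a\<parallel>\<^sup>2/2 + \<parallel>a - g\<parallel>\<^sup>2/2\<close>.\<close>

lemma differentiable_imp_has_derivative_inner: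
  fixes f :: "'a::euclidean_space \<Rightarrow> real"
  assumes "f differentiable (at x)"
  shows "\<exists>g. (f has_derivative (\<lambda>h. g \<bullet> h)) (at x)"
proof -
  obtain D where D: "(f has_derivative D) (at x)"
    using assms differentiable_def by blast
  have "D h = h \<bullet> adjoint D 1" for h
    using adjoint_works[OF has_derivative_linear[OF D], of h 1] by simp
  then have "D = (\<lambda>h. adjoint D 1 \<bullet> h)"
    by (auto simp: inner_commute)
  then show ?thesis
    using D by metis
qed

lemma grad_eqI:
  assumes "(f has_derivative (\<lambda>h. g \<bullet> h)) (at x)"
  shows "grad f x = g"
proof -
  have "g' = g" if "(f has_derivative (\<lambda>h. g' \<bullet> h)) (at x)" for g'
  proof -
    have "(\<lambda>h. g' \<bullet> h) = (\<lambda>h. g \<bullet> h)"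
      using has_derivative_unique that assms by blast
    then have "(g' - g) \<bullet> (g' - g) = 0"
      by (metis inner_diff_left inner_diff_right diff_self)
    then show ?thesis
      by simp
  qed
  then show ?thesis
    unfolding grad_def using assms by blast
qed

lemma has_derivative_grad:
  assumes "f differentiable (at x)"
  shows "(f has_derivative (\<lambda>h. grad f x \<bullet> h)) (at x)"
  using differentiable_imp_has_derivative_inner[OF assms] grad_eqI by metis

lemma has_derivative_scaled_sum_grad:
  assumes "finite I" and "\<forall>i\<in>I. f i differentiable (at x)"
  shows "((\<lambda>x. c * (\<Sum>i\<in>I. f i x)) has_derivative
           (\<lambda>h. (c *\<^sub>R (\<Sum>i\<in>I. grad (f i) x)) \<bullet> h)) (at x)"
proof -
  have "((\<lambda>x. \<Sum>i\<in>I. f i x) has_derivative (\<lambda>h. \<Sum>i\<in>I. grad (f i) x \<bullet> h)) (at x)"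
    using assms by (intro has_derivative_sum) (simp add: has_derivative_grad)
  from has_derivative_mult_right[OF this, of c] show ?thesis
    by (simp add: inner_sum_left)
qed

lemma grad_average:
  assumes "finite I" and "\<forall>i\<in>I. f i differentiable (at x)"
  shows "grad (\<lambda>x. (1 / real (card I)) * (\<Sum>i\<in>I. f i x)) x
           = (1 / real (card I)) *\<^sub>R (\<Sum>i\<in>I. grad (f i) x)"
  using grad_eqI[OF has_derivative_scaled_sum_grad[OF assms]] .

lemma L_smooth_average:
  assumes "finite I" and "I \<noteq> {}" and smooth: "\<forall>i\<in>I. L_smooth L (f i)"
  shows "L_smooth L (\<lambda>x. (1 / real (card I)) * (\<Sum>i\<in>I. f i x))"
proof -
  let ?c = "1 / real (card I)"
  have diff: "\<forall>i\<in>I. f i differentiable (at x)" for x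
    using smooth by (simp add: L_smooth_def)
  have "norm (grad (\<lambda>x. ?c * (\<Sum>i\<in>I. f i x)) x - grad (\<lambda>x. ?c * (\<Sum>i\<in>I. f i x)) y)
          \<le> L * norm (x - y)" for x y
  proof -
    have "norm (grad (\<lambda>x. ?c * (\<Sum>i\<in>I. f i x)) x - grad (\<lambda>x. ?c * (\<Sum>i\<in>I. f i x)) y)
            = norm (?c *\<^sub>R (\<Sum>i\<in>I. grad (f i) x - grad (f i) y))"
      by (simp only: grad_average[OF assms(1) diff] sum_subtractf scaleR_diff_right)
    also have "\<dots> = ?c * norm (\<Sum>i\<in>I. grad (f i) x - grad (f i) y)"
      by simp
    also have "\<dots> \<le> ?c * (\<Sum>i\<in>I. L * norm (x - y))"
      using smooth unfolding L_smooth_def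
      by (intro mult_left_mono order_trans[OF norm_sum sum_mono]) auto
    also have "\<dots> = L * norm (x - y)"
      using assms(1,2) by simp
    finally show ?thesis .
  qed
  moreover have "(\<lambda>x. ?c * (\<Sum>i\<in>I. f i x)) differentiable (at x)" for x
    using has_derivative_scaled_sum_grad[OF assms(1) diff] differentiable_def by blast
  ultimately show ?thesis
    unfolding L_smooth_def by blast
qed

lemma L_smooth_descent:
  fixes F :: "'a::euclidean_space \<Rightarrow> real"
  assumes "L_smooth L F"
  shows "F y \<le> F x + grad F x \<bullet> (y - x) + L / 2 * (norm (y - x))\<^sup>2"
proof -
  have diff: "\<And>x. F differentiable (at x)"
    and lip: "\<And>x y. norm (grad F x - grad F y) \<le> L * norm (x - y)"
    using assms unfolding L_smooth_def by blast+
  define d where "d = y - x"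
  define \<phi> where "\<phi> t = F (x + t *\<^sub>R d) - t * (grad F x \<bullet> d) - L / 2 * t\<^sup>2 * (norm d)\<^sup>2" for t
  have "\<phi> 1 \<le> \<phi> 0"
  proof (rule DERIV_nonpos_imp_nonincreasing[of 0 1 \<phi>])
    fix t :: real
    assume t: "0 \<le> t" "t \<le> 1"
    have line: "((\<lambda>t. F (x + t *\<^sub>R d)) has_derivative
                   (\<lambda>h. grad F (x + t *\<^sub>R d) \<bullet> (h *\<^sub>R d))) (at t)"
      by (rule diff_chain_at[unfolded o_def, where g = F and f = "\<lambda>t. x + t *\<^sub>R d", simplified])
         (auto intro!: derivative_eq_intros has_derivative_grad diff)
    have "(\<phi> has_derivative
            (\<lambda>h. ((grad F (x + t *\<^sub>R d) - grad F x) \<bullet> d - L * t * (norm d)\<^sup>2) * h)) (at t)"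
      unfolding \<phi>_def
      by (rule derivative_eq_intros line | simp)+ (simp add: fun_eq_iff algebra_simps inner_diff_left)
    then have "DERIV \<phi> t :> (grad F (x + t *\<^sub>R d) - grad F x) \<bullet> d - L * t * (norm d)\<^sup>2"
      by (simp add: has_field_derivative_def)
    moreover have "(grad F (x + t *\<^sub>R d) - grad F x) \<bullet> d \<le> L * t * (norm d)\<^sup>2"
    proof -
      have "(grad F (x + t *\<^sub>R d) - grad F x) \<bullet> d \<le> norm (grad F (x + t *\<^sub>R d) - grad F x) * norm d"
        by (rule norm_cauchy_schwarz)
      also have "\<dots> \<le> L * norm (t *\<^sub>R d) * norm d"
        using lip[of "x + t *\<^sub>R d" x] by (simp add: mult_right_mono)
      also have "\<dots> = L * t * (norm d)\<^sup>2"
        using t by (simp add: power2_eq_square)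
      finally show ?thesis .
    qed
    ultimately show "\<exists>y. DERIV \<phi> t :> y \<and> y \<le> 0"
      by auto
  qed simp
  then show ?thesis
    unfolding \<phi>_def d_def by simp
qed

lemma L_smooth_step:
  fixes F :: "'a::euclidean_space \<Rightarrow> real"
  assumes "L_smooth L F" and "0 \<le> \<eta>" and "L * \<eta> \<le> 1"
  shows "F (x - \<eta> *\<^sub>R g) \<le> F x - \<eta> / 2 * (norm (grad F x))\<^sup>2 + \<eta> / 2 * (norm (grad F x - g))\<^sup>2"
proof -
  let ?a = "grad F x"
  have "F (x - \<eta> *\<^sub>R g) \<le> F x - \<eta> * (?a \<bullet> g) + (L * \<eta>) * (\<eta> / 2 * (norm g)\<^sup>2)"
    using L_smooth_descent[OF assms(1), of "x - \<eta> *\<^sub>R g" x]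
    using assms(2) by (simp add: power2_eq_square algebra_simps)
  also have "\<dots> \<le> F x - \<eta> * (?a \<bullet> g) + \<eta> / 2 * (norm g)\<^sup>2"
    using mult_right_mono[OF assms(3), of "\<eta> / 2 * (norm g)\<^sup>2"] assms(2) by simp
  also have "\<dots> = F x - \<eta> / 2 * (norm ?a)\<^sup>2 + \<eta> / 2 * (norm (?a - g))\<^sup>2"
    by (simp add: dot_norm_neg[of ?a g] field_simps)
  finally show ?thesis .
qed

lemma nfg_inner_fst:
  "fst (nfg_inner f \<gamma> p \<omega> v t)
     = \<omega> - \<gamma> *\<^sub>R (\<Sum>k<t. grad (f (p k)) (fst (nfg_inner f \<gamma> p \<omega> v k)) - grad (f (p k)) \<omega> + v)"
  by (induction t) (simp_all add: split_beta Let_def algebra_simps)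

lemma nfg_omega_Suc:
  "nfg_omega f n \<gamma> \<pi> x0 (Suc s) = nfg_omega f n \<gamma> \<pi> x0 s - \<gamma> *\<^sub>R (\<Sum>t<n. nfg_dir f n \<gamma> \<pi> x0 s t)"
proof -
  have "nfg_omega f n \<gamma> \<pi> x0 (Suc s)
          = fst (nfg_inner f \<gamma> (\<pi> s) (nfg_omega f n \<gamma> \<pi> x0 s) (nfg_v f n \<gamma> \<pi> x0 s) n)"
    unfolding nfg_omega_def nfg_v_def by (simp add: split_beta)
  then show ?thesis
    by (subst (asm) nfg_inner_fst) (simp add: nfg_dir_def nfg_x_def)
qed

theorem lemma5:
  fixes f :: "nat \<Rightarrow> 'a::euclidean_space \<Rightarrow> real"
    and n :: nat and L \<gamma> :: real and \<pi> :: "nat \<Rightarrow> nat \<Rightarrow> nat" and x0 :: 'a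
    and F :: "'a \<Rightarrow> real"
  assumes n_pos: "n \<ge> 1"
    and F_def: "F = (\<lambda>x. (1 / real n) * (\<Sum>i<n. f i x))"
    and smooth: "\<forall>i<n. L_smooth L (f i)"
    and strong_or_bdd: "(\<exists>\<mu>>0. \<forall>i<n. strongly_convex \<mu> (f i)) \<or> bdd_below (range F)"
    and gamma_pos: "\<gamma> > 0"
    and gamma_le: "\<gamma> \<le> 1 / (L * real n)"
    and perm: "\<forall>s. \<pi> s permutes {..<n}"
  shows "F (nfg_omega f n \<gamma> \<pi> x0 (Suc s))
           \<le> F (nfg_omega f n \<gamma> \<pi> x0 s)
              - \<gamma> * real n / 2 * (norm (grad F (nfg_omega f n \<gamma> \<pi> x0 s)))\<^sup>2
              + \<gamma> * real n / 2 * (norm (grad F (nfg_omega f n \<gamma> \<pi> x0 s)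
                   - (1 / real n) *\<^sub>R (\<Sum>t<n. nfg_dir f n \<gamma> \<pi> x0 s t)))\<^sup>2"
proof -
  have F_smooth: "L_smooth L F"
    using L_smooth_average[of "{..<n}" L f] n_pos smooth unfolding F_def
    by (simp add: lessThan_empty_iff)
  have "0 < 1 / (L * real n)"
    using gamma_pos gamma_le by linarith
  then have "L > 0"
    using n_pos by (simp add: zero_less_mult_iff)
  then have step_le: "L * (\<gamma> * real n) \<le> 1"
    using gamma_le n_pos by (simp add: field_simps)
  have omega_step: "nfg_omega f n \<gamma> \<pi> x0 (Suc s)
          = nfg_omega f n \<gamma> \<pi> x0 s - (\<gamma> * real n) *\<^sub>R ((1 / real n) *\<^sub>R (\<Sum>t<n. nfg_dir f n \<gamma> \<pi> x0 s t))"
    using n_pos by (simp add: nfg_omega_Suc)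
  show ?thesis
    unfolding omega_step using gamma_pos by (intro L_smooth_step[OF F_smooth _ step_le]) simp
qed

end
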